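(* Let $f,g\in\mathbb{H}$ be linearly independent pure unit quaternions, $h\in L^1(\mathbb{R}^2,\mathbb{H})$, $h_{\pm}=\frac12(h\pm fhg)$, and $$\mathcal{F}_D^{f,g}\{h\}(\boldsymbol{\omega})=\int_{\mathbb{R}^2}e^{-f\frac12(x_1\omega_1+x_2\omega_2)}\,h(\mathbf{x})\,e^{-g\frac12(x_1\omega_1-x_2\omega_2)}\,d^2\mathbf{x}.$$ Writing $\mathcal{F}^{f,g}_{D\pm}\{h\}=\mathcal{F}^{f,g}_{D}\{h_{\pm}\}$, one has $$\mathcal{F}^{f,g}_{D+}\{h\}=\int_{\mathbb{R}^2}h_+(\mathbf{x})e^{g x_2\omega_2}d^2\mathbf{x}=\int_{\mathbb{R}^2}e^{-f x_2\omega_2}h_+(\mathbf{x})d^2\mathbf{x},\quad \mathcal{F}^{f,g}_{D-}\{h\}=\int_{\mathbb{R}^2}h_-(\mathbf{x})e^{-g x_1\omega_1}d^2\mathbf{x}=\int_{\mathbb{R}^2}e^{-f x_1\omega_1}h_-(\mathbf{x})d^2\mathbf{x}.$$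
   Context: $\mathbb{H}$ is the real quaternion algebra; a pure unit quaternion $f$ satisfies $f^2=-1$, and $e^{\alpha f}=\cos\alpha+f\sin\alpha$. $d^2\mathbf{x}=dx_1dx_2$. *)

theory Defs
  imports "HOL-Analysis.Analysis"
begin

text \<open>Real quaternions a + b i + c j + d k, represented as the Euclidean space
  real \<times> real \<times> real \<times> real (coordinates (a,b,c,d)); the norm is the usual
  quaternion norm and integration is the componentwise (Lebesgue/HK) integral.\<close>

type_synonym quat = "real \<times> real \<times> real \<times> real"

definition qmult :: "quat \<Rightarrow> quat \<Rightarrow> quat" where
  "qmult p q = (case p of (a1, b1, c1, d1) \<Rightarrow> case q of (a2, b2, c2, d2) \<Rightarrow>
     (a1*a2 - b1*b2 - c1*c2 - d1*d2,
      a1*b2 + b1*a2 + c1*d2 - d1*c2,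
      a1*c2 - b1*d2 + c1*a2 + d1*b2,
      a1*d2 + b1*c2 - c1*b2 + d1*a2))"

definition qone :: quat where "qone = (1, 0, 0, 0)"

definition pure_unit :: "quat \<Rightarrow> bool" where
  "pure_unit u \<longleftrightarrow> fst u = 0 \<and> norm u = 1"

definition qexp :: "real \<Rightarrow> quat \<Rightarrow> quat" where
  "qexp \<alpha> u = cos \<alpha> *\<^sub>R qone + sin \<alpha> *\<^sub>R u"

definition FD :: "quat \<Rightarrow> quat \<Rightarrow> (real \<times> real \<Rightarrow> quat) \<Rightarrow> real \<times> real \<Rightarrow> quat" where
  "FD f g h \<omega> = integral UNIV (\<lambda>x.
     qmult (qmult (qexp (- ((fst x * fst \<omega> + snd x * snd \<omega>) / 2)) f) (h x))
           (qexp (- ((fst x * fst \<omega> - snd x * snd \<omega>) / 2)) g))"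

definition hplus :: "quat \<Rightarrow> quat \<Rightarrow> (real \<times> real \<Rightarrow> quat) \<Rightarrow> real \<times> real \<Rightarrow> quat" where
  "hplus f g h x = (1/2) *\<^sub>R (h x + qmult (qmult f (h x)) g)"

definition hminus :: "quat \<Rightarrow> quat \<Rightarrow> (real \<times> real \<Rightarrow> quat) \<Rightarrow> real \<times> real \<Rightarrow> quat" where
  "hminus f g h x = (1/2) *\<^sub>R (h x - qmult (qmult f (h x)) g)"

end

theory Submission
  imports Defs
begin

text \<open>For a pure unit quaternion f we have f^2 = -1, so the component h_+ anticommutes
  through the pair (f, g), that is f h_+ = -h_+ g, and h_- commutes, that is f h_- = h_- g.
  Hence e^{\<alpha> f} h_\<plusminus> = h_\<plusminus> e^{\<alpha> g} with the sign of \<alpha> flipped for h_+.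
  Moving the left kernel of F_D across h_\<plusminus> and merging the two exponentials in g makes
  the x_1 phase cancel for h_+ and the x_2 phase cancel for h_-.\<close>

lemma qmult_Pair:
  "qmult (a1, b1, c1, d1) (a2, b2, c2, d2) =
     (a1*a2 - b1*b2 - c1*c2 - d1*d2,
      a1*b2 + b1*a2 + c1*d2 - d1*c2,
      a1*c2 - b1*d2 + c1*a2 + d1*b2,
      a1*d2 + b1*c2 - c1*b2 + d1*a2)"
  by (simp add: qmult_def)

lemma qmult_assoc_Pair:
  "qmult (qmult (a1, b1, c1, d1) (a2, b2, c2, d2)) (a3, b3, c3, d3)
     = qmult (a1, b1, c1, d1) (qmult (a2, b2, c2, d2) (a3, b3, c3, d3))"
  unfolding qmult_Pair prod_eq_iff fst_conv snd_conv by (intro conjI; algebra)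

lemma qmult_assoc: "qmult (qmult p q) r = qmult p (qmult q r)"
  by (cases p; cases q; cases r) (simp only: qmult_assoc_Pair)

lemma qmult_add_left: "qmult (p + q) r = qmult p r + qmult q r"
  by (cases p; cases q; cases r) (simp add: qmult_Pair algebra_simps)

lemma qmult_add_right: "qmult r (p + q) = qmult r p + qmult r q"
  by (cases p; cases q; cases r) (simp add: qmult_Pair algebra_simps)

lemma qmult_diff_left: "qmult (p - q) r = qmult p r - qmult q r"
  by (cases p; cases q; cases r) (simp add: qmult_Pair algebra_simps)

lemma qmult_diff_right: "qmult r (p - q) = qmult r p - qmult r q"
  by (cases p; cases q; cases r) (simp add: qmult_Pair algebra_simps)

lemma qmult_minus_left: "qmult (- p) r = - qmult p r"
  by (cases p; cases r) (simp add: qmult_Pair algebra_simps)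

lemma qmult_minus_right: "qmult r (- p) = - qmult r p"
  by (cases p; cases r) (simp add: qmult_Pair algebra_simps)

lemma qmult_scaleR_left: "qmult (c *\<^sub>R p) r = c *\<^sub>R qmult p r"
  by (cases p; cases r) (simp add: qmult_Pair algebra_simps)

lemma qmult_scaleR_right: "qmult r (c *\<^sub>R p) = c *\<^sub>R qmult r p"
  by (cases p; cases r) (simp add: qmult_Pair algebra_simps)

lemma qmult_qone_left: "qmult qone p = p"
  by (cases p) (simp add: qmult_Pair qone_def)

lemma qmult_qone_right: "qmult p qone = p"
  by (cases p) (simp add: qmult_Pair qone_def)

lemmas qmult_linear =
  qmult_add_left qmult_add_right qmult_diff_left qmult_diff_right
  qmult_minus_left qmult_minus_right qmult_scaleR_left qmult_scaleR_right
  qmult_qone_left qmult_qone_right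

lemma pure_unit_square:
  assumes "pure_unit u"
  shows "qmult u u = - qone"
proof -
  obtain a b c d where u: "u = (a, b, c, d)"
    by (cases u) auto
  from assms have "a = 0" "sqrt (a\<^sup>2 + (sqrt (b\<^sup>2 + (sqrt (c\<^sup>2 + d\<^sup>2))\<^sup>2))\<^sup>2) = 1"
    by (auto simp: pure_unit_def u norm_Pair)
  then have "a = 0" "b\<^sup>2 + c\<^sup>2 + d\<^sup>2 = 1"
    by (auto simp: add_nonneg_nonneg)
  then show ?thesis
    by (simp add: u qmult_Pair qone_def power2_eq_square algebra_simps)
qed

lemma pure_unit_square_left:
  assumes "pure_unit u"
  shows "qmult u (qmult u q) = - q"
  using pure_unit_square[OF assms]
  by (simp add: qmult_assoc[symmetric] qmult_minus_left qmult_qone_left)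

lemma qexp_add:
  assumes "pure_unit u"
  shows "qmult (qexp a u) (qexp b u) = qexp (a + b) u"
  using pure_unit_square[OF assms]
  by (simp add: qexp_def qmult_linear cos_add sin_add algebra_simps)

lemma hplus_anticommute:
  assumes "pure_unit f" "pure_unit g"
  shows "qmult f (hplus f g h x) = - qmult (hplus f g h x) g"
  unfolding hplus_def using pure_unit_square_left[OF assms(1)] pure_unit_square[OF assms(2)]
  by (simp add: qmult_linear qmult_assoc algebra_simps)

lemma hminus_commute:
  assumes "pure_unit f" "pure_unit g"
  shows "qmult f (hminus f g h x) = qmult (hminus f g h x) g"
  unfolding hminus_def using pure_unit_square_left[OF assms(1)] pure_unit_square[OF assms(2)]
  by (simp add: qmult_linear qmult_assoc algebra_simps)

lemma qexp_anticommute: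
  assumes "qmult f p = - qmult p g"
  shows "qmult (qexp a f) p = qmult p (qexp (- a) g)"
  using assms by (simp add: qexp_def qmult_linear)

lemma qexp_commute:
  assumes "qmult f p = qmult p g"
  shows "qmult (qexp a f) p = qmult p (qexp a g)"
  using assms by (simp add: qexp_def qmult_linear)

lemma FD_kernel_anticommute:
  assumes "pure_unit g" "qmult f p = - qmult p g"
  shows "qmult (qmult (qexp (- ((s + t) / 2)) f) p) (qexp (- ((s - t) / 2)) g)
           = qmult p (qexp t g)"
  by (simp add: qexp_anticommute[OF assms(2)] qmult_assoc qexp_add[OF assms(1)] field_simps)

lemma FD_kernel_commute:
  assumes "pure_unit g" "qmult f p = qmult p g"
  shows "qmult (qmult (qexp (- ((s + t) / 2)) f) p) (qexp (- ((s - t) / 2)) g)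
           = qmult p (qexp (- s) g)"
  by (simp add: qexp_commute[OF assms(2)] qmult_assoc qexp_add[OF assms(1)] field_simps)

theorem mainTheorem6:
  fixes f g :: quat and h :: "real \<times> real \<Rightarrow> quat" and \<omega> :: "real \<times> real"
  assumes "pure_unit f" and "pure_unit g"
    and "\<forall>a b :: real. a *\<^sub>R f + b *\<^sub>R g = 0 \<longrightarrow> a = 0 \<and> b = 0"
    and "h absolutely_integrable_on UNIV"
  shows "FD f g (hplus f g h) \<omega>
           = integral UNIV (\<lambda>x. qmult (hplus f g h x) (qexp (snd x * snd \<omega>) g))
       \<and> FD f g (hplus f g h) \<omega>
           = integral UNIV (\<lambda>x. qmult (qexp (- (snd x * snd \<omega>)) f) (hplus f g h x))
       \<and> FD f g (hminus f g h) \<omega>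
           = integral UNIV (\<lambda>x. qmult (hminus f g h x) (qexp (- (fst x * fst \<omega>)) g))
       \<and> FD f g (hminus f g h) \<omega>
           = integral UNIV (\<lambda>x. qmult (qexp (- (fst x * fst \<omega>)) f) (hminus f g h x))"
proof -
  note plus = hplus_anticommute[OF assms(1,2)]
  note minus = hminus_commute[OF assms(1,2)]
  show ?thesis
    unfolding FD_def FD_kernel_anticommute[OF assms(2) plus] FD_kernel_commute[OF assms(2) minus]
    by (simp add: qexp_anticommute[OF plus] qexp_commute[OF minus])
qed

end
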